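(* Let $k$ be an algebraically closed field of characteristic $p>0$. Let $e_1\ge e_2$ be positive integers with $e=e_1+e_2$, $p\nmid(e-1)(e_1-1)(e_2-1)$, and let $pw$ be the smallest multiple of $p$ that is $\ge e_1$. Suppose $\lfloor\frac{e-1}{p}\rfloor>\lfloor\frac{e_1-1}{p}\rfloor+\lfloor\frac{e_2-1}{p}\rfloor$. Then there exists a rational function $G(x,t)\in\operatorname{Frac}(k[x,t])$ whose partial fraction decomposition in $k(t)(x)$ has the form $$G(x,t)=\sum_{i=1}^{e_1-1}\frac{a_i}{x^i}+\frac{a_{pw}}{x^{pw}}+\sum_{j=1}^{e_2-1}\frac{b_j}{(x-t)^j}$$ with all $a_i,b_j\in k(t)$ and $a_{pw},a_{e_1-1},b_{e_2-1}\neq0$, such that $G(x,0)\in\operatorname{Frac}(k[x])$ has exactly one pole, of order $e-1$, at $x=0$. *)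

theory Defs
  imports "HOL-Computational_Algebra.Computational_Algebra"
begin

text \<open>k(t) is modelled as 'a poly fract; k(t)(x) = Frac(k[x,t]) as ('a poly fract) poly fract;
  k[t][x] = k[x,t] as 'a poly poly (outer variable x, coefficients in k[t]); k(x) as 'a poly fract.\<close>

definition xvar :: "'b::field poly fract" where
  "xvar = to_fract [:0, 1:]"

definition tvar :: "'a::field poly fract" where
  "tvar = to_fract [:0, 1:]"

definition constK :: "'b::field \<Rightarrow> 'b poly fract" where
  "constK c = to_fract [:c:]"

definition embed_xt :: "'a::field poly poly \<Rightarrow> 'a poly fract poly fract" where
  "embed_xt N = to_fract (map_poly to_fract N)"

definition spec_t0 :: "'a::field poly poly \<Rightarrow> 'a poly" where
  "spec_t0 N = map_poly (\<lambda>c. poly c 0) N"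

text \<open>G(x,0) = R: G can be written N/D with N, D in k[x,t], D(x,0) \<noteq> 0, and R = N(x,0)/D(x,0).\<close>
definition specializes_to :: "'a::field poly fract poly fract \<Rightarrow> 'a poly fract \<Rightarrow> bool" where
  "specializes_to G R \<longleftrightarrow> (\<exists>N D. D \<noteq> 0 \<and> spec_t0 D \<noteq> 0 \<and> G = embed_xt N / embed_xt D
      \<and> R = Fract (spec_t0 N) (spec_t0 D))"

text \<open>R \<in> k(x) has exactly one pole on the projective line, at x = 0, of order m:
  R = P / x^m with P(0) \<noteq> 0 and deg P \<le> m (no pole at infinity).\<close>
definition single_pole_at_0 :: "'a::field poly fract \<Rightarrow> nat \<Rightarrow> bool" where
  "single_pole_at_0 R m \<longleftrightarrow> m > 0 \<and> (\<exists>P. poly P 0 \<noteq> 0 \<and> degree P \<le> m \<and> R = Fract P ([:0, 1:] ^ m))"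

end

theory Submission
  imports Defs
begin

text \<open>
  Write n = e2 - 1 and pw = e1 + d. Cutting the binomial expansion of (t - x)^n after degree d
  gives (t - x)^n = t^(n-d) H + x^(d+1) T, where H = sum over k \<le> d of (-1)^k C(n,k) t^(d-k) x^k.
  Take G = H / (x^pw (x - t)^n). Dividing the cut expansion by t^(n-d) x^pw (x - t)^n shows that G
  is a constant multiple of x^(-pw) plus T / (x^(e1-1) (x - t)^n), and the leading partial fraction
  coefficients of the latter are proportional to T(0) and T(t), i.e. to C(n, d+1) and C(n-1, d).
  At t = 0 only the monomial (-1)^d C(n,d) x^d of H survives, so G(x,0) = (-1)^d C(n,d) / x^(e-1).
  Since d + 1 = p - ((e1 - 1) mod p), the floor hypothesis (a carry in the last base-p digit of
  (e1 - 1) + (e2 - 1)) says exactly that d + 1 \<le> (e2 - 1) mod p, which makes all three binomial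
  coefficients prime to p.
\<close>

lemma to_fract_power [simp]: "to_fract (x ^ n) = to_fract x ^ n"
  by (induction n) simp_all

lemma to_fract_of_nat [simp]: "to_fract (of_nat n) = of_nat n"
  by (induction n) simp_all

lemma of_nat_fract_poly_eq_0_iff: "(of_nat m :: 'a::field poly fract) = 0 \<longleftrightarrow> (of_nat m :: 'a) = 0"
proof -
  have "(of_nat m :: 'a poly fract) = to_fract [:of_nat m:]"
    by (metis of_nat_poly to_fract_of_nat)
  then show ?thesis
    by simp
qed

lemma to_fract_smult: "to_fract (smult a p) = constK a * to_fract p"
  by (simp add: constK_def flip: to_fract_mult)

lemma constK_1 [simp]: "constK 1 = 1"
  by (simp add: constK_def flip: one_pCons)

lemma constK_mult: "constK (a * b) = constK a * constK b"
  by (simp add: constK_def flip: to_fract_mult)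

lemma constK_uminus: "constK (- a) = - constK a"
  by (metis constK_def minus_pCons minus_zero to_fract_uminus)

lemma xvar_nonzero [simp]: "xvar \<noteq> 0"
  by (simp add: xvar_def)

lemma xvar_minus_constK: "xvar - constK c = to_fract [:-c, 1:]"
  by (simp add: xvar_def constK_def flip: to_fract_diff)

lemma xvar_neq_constK [simp]: "xvar \<noteq> constK c"
  using xvar_minus_constK[of c] by auto

lemma fract_poly_sum: "fract_poly (sum f A) = (\<Sum>x\<in>A. fract_poly (f x))"
  by (induction A rule: infinite_finite_induct) simp_all

lemma fract_poly_power: "fract_poly (p ^ n) = fract_poly p ^ n"
  by (induction n) simp_all

lemma spec_t0_0 [simp]: "spec_t0 0 = 0"
  by (simp add: spec_t0_def)

lemma spec_t0_1 [simp]: "spec_t0 1 = 1"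
  by (simp add: spec_t0_def)

lemma spec_t0_add: "spec_t0 (p + q) = spec_t0 p + spec_t0 q"
  by (rule poly_eqI) (simp add: spec_t0_def coeff_map_poly)

lemma spec_t0_mult: "spec_t0 (p * q) = spec_t0 p * spec_t0 q"
  by (rule poly_eqI) (simp add: spec_t0_def coeff_map_poly coeff_mult poly_sum)

lemma spec_t0_power: "spec_t0 (p ^ n) = spec_t0 p ^ n"
  by (induction n) (simp_all add: spec_t0_mult)

lemma spec_t0_sum: "spec_t0 (sum f A) = (\<Sum>x\<in>A. spec_t0 (f x))"
  by (induction A rule: infinite_finite_induct) (simp_all add: spec_t0_add)

section \<open>Partial fractions with poles at 0 and s\<close>

lemma partial_fractions_linear_power:
  fixes W :: "'k::field poly"
  assumes "degree W \<le> n"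
  shows "\<exists>\<beta>. to_fract W / (xvar - constK c) ^ Suc n
      = (\<Sum>j = 1..Suc n. constK (\<beta> j) / (xvar - constK c) ^ j) \<and> \<beta> (Suc n) = poly W c"
  using assms
proof (induction n arbitrary: W)
  case 0
  then obtain w where "W = [:w:]"
    by (metis degree_0_id le_zero_eq)
  then show ?case
    by (intro exI[of _ "\<lambda>_. w"]) (simp add: constK_def)
next
  case (Suc n)
  define L where "L = xvar - constK c"
  define W' where "W' = synthetic_div W c"
  have "degree W' \<le> n"
    using Suc.prems by (simp add: W'_def degree_synthetic_div)
  then obtain \<beta> where \<beta>: "to_fract W' / L ^ Suc n = (\<Sum>j = 1..Suc n. constK (\<beta> j) / L ^ j)"
    using Suc.IH unfolding L_def by blast
  have "to_fract W = to_fract ([:-c, 1:] * W' + [:poly W c:])"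
    by (simp only: W'_def synthetic_div_correct')
  also have "\<dots> = L * to_fract W' + constK (poly W c)"
    by (simp only: to_fract_add to_fract_mult L_def xvar_minus_constK constK_def[symmetric])
  finally have W_fract: "to_fract W = L * to_fract W' + constK (poly W c)" .
  have "L \<noteq> 0"
    by (simp add: L_def)
  then have "to_fract W / L ^ Suc (Suc n) = to_fract W' / L ^ Suc n + constK (poly W c) / L ^ Suc (Suc n)"
    unfolding W_fract by (simp add: field_simps)
  also have "\<dots> = (\<Sum>j = 1..Suc (Suc n). constK ((\<beta>(Suc (Suc n) := poly W c)) j) / L ^ j)"
    using \<beta> by simp
  finally show ?case
    unfolding L_def by (intro exI[of _ "\<beta>(Suc (Suc n) := poly W c)"]) simp
qed

lemma partial_fractions_two_poles:
  fixes W :: "'k::field poly"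
  assumes "s \<noteq> 0" and "degree W < a + Suc n"
  shows "\<exists>\<alpha> \<beta>. to_fract W / (xvar ^ a * (xvar - constK s) ^ Suc n)
      = (\<Sum>i = 1..a. constK (\<alpha> i) / xvar ^ i) + (\<Sum>j = 1..Suc n. constK (\<beta> j) / (xvar - constK s) ^ j)
    \<and> \<beta> (Suc n) * s ^ a = poly W s \<and> (0 < a \<longrightarrow> \<alpha> a * (-s) ^ Suc n = poly W 0)"
  using assms(2)
proof (induction a arbitrary: W)
  case 0
  then show ?case
    using partial_fractions_linear_power[of W n s] by auto
next
  case (Suc a)
  define L where "L = xvar - constK s"
  define B where "B = [:-s, 1:] ^ Suc n"
  define c where "c = poly W 0 / (-s) ^ Suc n"
  define W' where "W' = synthetic_div (W - smult c B) 0"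
  have "poly (W - smult c B) 0 = 0"
    using assms(1) by (simp add: B_def c_def)
  then have W_split: "W = smult c B + [:0, 1:] * W'"
    using synthetic_div_correct'[of 0 "W - smult c B"] by (simp add: W'_def algebra_simps)
  have "degree B = Suc n"
    unfolding B_def by (rule degree_linear_power)
  then have "degree (W - smult c B) \<le> a + Suc n"
    using Suc.prems by (intro degree_diff_le) (auto intro: order.trans[OF degree_smult_le])
  then have "degree W' < a + Suc n"
    by (simp add: W'_def degree_synthetic_div)
  then obtain \<alpha> \<beta> where IH: "to_fract W' / (xvar ^ a * L ^ Suc n)
      = (\<Sum>i = 1..a. constK (\<alpha> i) / xvar ^ i) + (\<Sum>j = 1..Suc n. constK (\<beta> j) / L ^ j)"
    and \<beta>: "\<beta> (Suc n) * s ^ a = poly W' s"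
    using Suc.IH unfolding L_def by blast
  have "to_fract W = to_fract ([:c:] * [:-s, 1:] ^ Suc n + [:0, 1:] * W')"
    by (subst W_split) (simp add: B_def)
  also have "\<dots> = constK c * L ^ Suc n + xvar * to_fract W'"
    by (simp only: to_fract_add to_fract_mult to_fract_power L_def xvar_minus_constK constK_def[symmetric] xvar_def[symmetric])
  finally have W_fract: "to_fract W = constK c * L ^ Suc n + xvar * to_fract W'" .
  have "L \<noteq> 0"
    by (simp add: L_def)
  then have "to_fract W / (xvar ^ Suc a * L ^ Suc n) = constK c / xvar ^ Suc a + to_fract W' / (xvar ^ a * L ^ Suc n)"
    unfolding W_fract by (simp add: add_divide_distrib)
  also have "\<dots> = (\<Sum>i = 1..Suc a. constK ((\<alpha>(Suc a := c)) i) / xvar ^ i) + (\<Sum>j = 1..Suc n. constK (\<beta> j) / L ^ j)"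
    using IH by simp
  finally have eq: "to_fract W / (xvar ^ Suc a * L ^ Suc n) = \<dots>" .
  have "poly W s = s * poly W' s"
    by (subst W_split) (simp add: B_def)
  then have "\<beta> (Suc n) * s ^ Suc a = poly W s"
    using \<beta> by (simp add: algebra_simps)
  moreover have "c * (-s) ^ Suc n = poly W 0"
    using assms(1) by (simp add: c_def)
  ultimately show ?case
    using eq unfolding L_def by (intro exI[of _ "\<alpha>(Suc a := c)"] exI[of _ \<beta>]) simp
qed

section \<open>Truncated binomial expansion of (s - x)^n\<close>

definition binomial_head :: "'k::comm_ring_1 \<Rightarrow> nat \<Rightarrow> nat \<Rightarrow> 'k poly" where
  "binomial_head s n d = (\<Sum>k\<le>d. monom ((-1) ^ k * of_nat (n choose k) * s ^ (d - k)) k)"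

definition binomial_tail :: "'k::comm_ring_1 \<Rightarrow> nat \<Rightarrow> nat \<Rightarrow> 'k poly" where
  "binomial_tail s n d = (\<Sum>k = Suc d..n. monom ((-1) ^ k * of_nat (n choose k) * s ^ (n - k)) (k - Suc d))"

lemma alternating_sum_choose_Suc:
  "(\<Sum>k\<le>m. (-1) ^ k * of_nat (Suc n choose k)) = ((-1) ^ m * of_nat (n choose m) :: 'a::comm_ring_1)"
  by (induction m) (simp_all add: algebra_simps)

lemma linear_power_expansion:
  fixes s :: "'k::comm_ring_1"
  shows "[:s, -1:] ^ n = (\<Sum>k\<le>n. monom ((-1) ^ k * of_nat (n choose k) * s ^ (n - k)) k)"
proof -
  have "[:s, -1:] = monom (-1) 1 + [:s:]"
    by (simp add: monom_Suc monom_0)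
  then have "[:s, -1:] ^ n = (\<Sum>k\<le>n. of_nat (n choose k) * monom (-1) 1 ^ k * [:s:] ^ (n - k))"
    by (simp add: binomial_ring)
  also have "\<dots> = (\<Sum>k\<le>n. monom ((-1) ^ k * of_nat (n choose k) * s ^ (n - k)) k)"
    by (simp add: monom_power poly_const_pow of_nat_poly smult_monom mult.commute mult.left_commute)
  finally show ?thesis .
qed

lemma linear_power_split:
  fixes s :: "'k::comm_ring_1"
  assumes "d < n"
  shows "[:s, -1:] ^ n = [:s ^ (n - d):] * binomial_head s n d + monom 1 (Suc d) * binomial_tail s n d"
proof -
  define f where "f k = monom ((-1) ^ k * of_nat (n choose k) * s ^ (n - k)) k" for k
  have "[:s, -1:] ^ n = sum f {0..d + (n - d)}"
    using assms by (simp add: linear_power_expansion f_def atLeast0AtMost)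
  also have "\<dots> = sum f {0..d} + sum f {Suc d..n}"
    using assms by (subst sum.ub_add_nat) simp_all
  also have "sum f {0..d} = [:s ^ (n - d):] * binomial_head s n d"
    unfolding binomial_head_def sum_distrib_left atLeast0AtMost
  proof (rule sum.cong[OF refl])
    fix k assume "k \<in> {..d}"
    then have "s ^ (n - k) = s ^ (n - d) * s ^ (d - k)"
      using assms by (simp flip: power_add)
    then show "f k = [:s ^ (n - d):] * monom ((-1) ^ k * of_nat (n choose k) * s ^ (d - k)) k"
      by (simp add: f_def smult_monom algebra_simps)
  qed
  also have "sum f {Suc d..n} = monom 1 (Suc d) * binomial_tail s n d"
    unfolding binomial_tail_def sum_distrib_left
    by (rule sum.cong) (simp_all add: f_def mult_monom)
  finally show ?thesis .
qed

lemma poly_binomial_head_self: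
  "poly (binomial_head s (Suc n) d) s = s ^ d * ((-1) ^ d * of_nat (n choose d))"
proof -
  have "poly (binomial_head s (Suc n) d) s = (\<Sum>k\<le>d. s ^ d * ((-1) ^ k * of_nat (Suc n choose k)))"
    unfolding binomial_head_def poly_sum poly_monom
  proof (rule sum.cong[OF refl])
    fix k assume "k \<in> {..d}"
    then have "s ^ (d - k) * s ^ k = s ^ d"
      by (simp flip: power_add)
    moreover have "(-1) ^ k * of_nat (Suc n choose k) * s ^ (d - k) * s ^ k
        = s ^ (d - k) * s ^ k * ((-1) ^ k * of_nat (Suc n choose k))"
      by (simp only: ac_simps)
    ultimately show "(-1) ^ k * of_nat (Suc n choose k) * s ^ (d - k) * s ^ k
        = s ^ d * ((-1) ^ k * of_nat (Suc n choose k))"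
      by simp
  qed
  also have "\<dots> = s ^ d * ((-1) ^ d * of_nat (n choose d))"
    by (simp add: alternating_sum_choose_Suc flip: sum_distrib_left)
  finally show ?thesis .
qed

lemma poly_binomial_tail_0:
  assumes "d < n"
  shows "poly (binomial_tail s n d) 0 = (-1) ^ Suc d * of_nat (n choose Suc d) * s ^ (n - Suc d)"
proof -
  have "poly (binomial_tail s n d) 0
      = (\<Sum>k\<in>{Suc d..n}. if k = Suc d then (-1) ^ Suc d * of_nat (n choose Suc d) * s ^ (n - Suc d) else 0)"
    unfolding binomial_tail_def poly_sum poly_monom by (rule sum.cong) (auto simp: power_0_left)
  then show ?thesis
    using assms by simp
qed

lemma poly_binomial_tail_self:
  fixes s :: "'k::field"
  assumes "s \<noteq> 0" and "d < Suc n"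
  shows "poly (binomial_tail s (Suc n) d) s = (-1) ^ Suc d * of_nat (n choose d) * s ^ (n - d)"
proof -
  have "0 = s ^ (Suc n - d) * poly (binomial_head s (Suc n) d) s + s ^ Suc d * poly (binomial_tail s (Suc n) d) s"
    using arg_cong[OF linear_power_split[OF assms(2), of s], of "\<lambda>p. poly p s"] by (simp add: poly_monom)
  also have "s ^ (Suc n - d) * poly (binomial_head s (Suc n) d) s
      = s ^ Suc d * (s ^ (n - d) * ((-1) ^ d * of_nat (n choose d)))"
    using assms(2) by (simp add: poly_binomial_head_self algebra_simps flip: power_add)
  finally have "s ^ Suc d * (poly (binomial_tail s (Suc n) d) s - (-1) ^ Suc d * of_nat (n choose d) * s ^ (n - d)) = 0"
    by (simp add: algebra_simps)
  then show ?thesis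
    using assms(1) by (simp add: eq_neg_iff_add_eq_0)
qed

lemma degree_binomial_tail: "degree (binomial_tail s n d) \<le> n"
  unfolding binomial_tail_def by (rule degree_sum_le) (auto intro: order.trans[OF degree_monom_le])

lemma binomial_head_fract_identity:
  fixes s :: "'k::field"
  assumes "d < n"
  shows "constK (s ^ (n - d)) * to_fract (binomial_head s n d)
      = constK ((-1) ^ n) * (xvar - constK s) ^ n - xvar ^ Suc d * to_fract (binomial_tail s n d)"
proof -
  have "[:s, -1:] = [:-1:] * [:-s, 1:]"
    by simp
  then have "[:s, -1:] ^ n = [:(-1) ^ n:] * [:-s, 1:] ^ n"
    by (simp only: power_mult_distrib poly_const_pow)
  then have "[:s ^ (n - d):] * binomial_head s n d
      = [:(-1) ^ n:] * [:-s, 1:] ^ n - [:0, 1:] ^ Suc d * binomial_tail s n d"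
    using linear_power_split[OF assms, of s] by (simp add: monom_altdef eq_diff_eq)
  from arg_cong[OF this, of to_fract] show ?thesis
    by (simp only: to_fract_mult to_fract_diff to_fract_power xvar_minus_constK
        constK_def[symmetric] xvar_def[symmetric])
qed

lemma binomial_head_fract_decomposition:
  fixes s :: "'k::field"
  assumes s: "s \<noteq> 0" and "d < n"
  shows "to_fract (binomial_head s n d) = constK ((-1) ^ n / s ^ (n - d)) * (xvar - constK s) ^ n
      + xvar ^ Suc d * to_fract (smult (- 1 / s ^ (n - d)) (binomial_tail s n d))"
    (is "_ = constK ?apw * ?L + xvar ^ Suc d * to_fract ?W")
proof -
  define c where "c = s ^ (n - d)"
  have c: "c \<noteq> 0"
    using s by (simp add: c_def)
  have apw: "constK c * constK ?apw = constK ((-1) ^ n)"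
    unfolding c_def[symmetric] constK_mult[symmetric] using c by simp
  have "constK c * constK (- 1 / c) = -1"
    unfolding constK_mult[symmetric] using c by (simp add: constK_uminus)
  then have W: "constK c * to_fract ?W = - to_fract (binomial_tail s n d)"
    unfolding to_fract_smult c_def[symmetric] mult.assoc[symmetric] by simp
  have "constK c * (constK ?apw * ?L + xvar ^ Suc d * to_fract ?W)
      = constK c * constK ?apw * ?L + xvar ^ Suc d * (constK c * to_fract ?W)"
    by (simp add: algebra_simps)
  also have "\<dots> = constK ((-1) ^ n) * ?L - xvar ^ Suc d * to_fract (binomial_tail s n d)"
    unfolding apw W by simp
  also have "\<dots> = constK c * to_fract (binomial_head s n d)"
    using binomial_head_fract_identity[OF assms(2), of s] by (simp add: c_def)
  finally show ?thesis
    using c by (simp add: constK_def)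
qed

lemma partial_fractions_binomial_head:
  fixes s :: "'k::field"
  assumes s: "s \<noteq> 0"
    and choose_Suc: "of_nat (Suc n choose Suc d) \<noteq> (0::'k)" and choose: "of_nat (n choose d) \<noteq> (0::'k)"
  shows "\<exists>\<alpha> apw \<beta>. to_fract (binomial_head s (Suc n) d) / (xvar ^ (Suc a + Suc d) * (xvar - constK s) ^ Suc n)
      = (\<Sum>i = 1..Suc a. constK (\<alpha> i) / xvar ^ i) + constK apw / xvar ^ (Suc a + Suc d)
        + (\<Sum>j = 1..Suc n. constK (\<beta> j) / (xvar - constK s) ^ j)
    \<and> apw \<noteq> 0 \<and> \<alpha> (Suc a) \<noteq> 0 \<and> \<beta> (Suc n) \<noteq> 0"
proof -
  have dn: "d < Suc n"
    using choose_Suc by (metis binomial_eq_0 not_less_eq of_nat_0)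
  define c where "c = s ^ (Suc n - d)"
  define apw where "apw = (-1) ^ Suc n / c"
  define W where "W = smult (- 1 / c) (binomial_tail s (Suc n) d)"
  define L where "L = xvar - constK s"
  have c: "c \<noteq> 0"
    using s by (simp add: c_def)
  have "degree W < Suc a + Suc n"
    using degree_binomial_tail[of s "Suc n" d] by (simp add: W_def)
  then obtain \<alpha> \<beta> where pf: "to_fract W / (xvar ^ Suc a * L ^ Suc n)
      = (\<Sum>i = 1..Suc a. constK (\<alpha> i) / xvar ^ i) + (\<Sum>j = 1..Suc n. constK (\<beta> j) / L ^ j)"
    and \<beta>: "\<beta> (Suc n) * s ^ Suc a = poly W s" and \<alpha>: "\<alpha> (Suc a) * (-s) ^ Suc n = poly W 0"
    using partial_fractions_two_poles[OF s] unfolding L_def by blast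
  have head: "to_fract (binomial_head s (Suc n) d) = constK apw * L ^ Suc n + xvar ^ Suc d * to_fract W"
    unfolding apw_def W_def c_def L_def by (rule binomial_head_fract_decomposition[OF s dn])
  have "L \<noteq> 0"
    by (simp add: L_def)
  then have "to_fract (binomial_head s (Suc n) d) / (xvar ^ (Suc a + Suc d) * L ^ Suc n)
      = constK apw / xvar ^ (Suc a + Suc d) + to_fract W / (xvar ^ Suc a * L ^ Suc n)"
    unfolding head by (simp add: add_divide_distrib power_add)
  moreover have "apw \<noteq> 0"
    using c by (simp add: apw_def)
  moreover have "\<alpha> (Suc a) \<noteq> 0"
    using \<alpha> c s choose_Suc dn by (auto simp: W_def poly_binomial_tail_0 simp del: binomial_Suc_Suc)
  moreover have "\<beta> (Suc n) \<noteq> 0"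
    using \<beta> c s choose dn by (auto simp: W_def poly_binomial_tail_self)
  ultimately show ?thesis
    using pf unfolding L_def by (intro exI[of _ \<alpha>] exI[of _ apw] exI[of _ \<beta>]) (simp add: ac_simps)
qed

section \<open>Specialisation at t = 0\<close>

lemma fract_poly_binomial_head: "fract_poly (binomial_head s n d) = binomial_head (to_fract s) n d"
  unfolding binomial_head_def fract_poly_sum by (simp add: map_poly_monom)

lemma spec_t0_binomial_head:
  "spec_t0 (binomial_head [:0, 1:] n d) = monom ((-1) ^ d * of_nat (n choose d)) d"
proof -
  have "spec_t0 (binomial_head [:0, 1:] n d) = (\<Sum>k\<le>d. if k = d then monom ((-1) ^ d * of_nat (n choose d)) d else 0)"
    unfolding binomial_head_def spec_t0_sum
    by (rule sum.cong) (auto simp: spec_t0_def map_poly_monom of_nat_poly poly_monom power_0_left)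
  then show ?thesis
    by simp
qed

lemma specializes_to_binomial_head_quotient:
  "specializes_to (to_fract (binomial_head tvar n d) / (xvar ^ m * (xvar - constK tvar) ^ n))
      (Fract (monom ((-1) ^ d * of_nat (n choose d)) d) ([:0, 1:] ^ (m + n)))"
proof -
  define N :: "'a::field poly poly" where "N = binomial_head [:0, 1:] n d"
  define D :: "'a poly poly" where "D = [:0, 1:] ^ m * [:-[:0, 1:], 1:] ^ n"
  have "embed_xt N = to_fract (binomial_head tvar n d)"
    by (simp add: embed_xt_def N_def fract_poly_binomial_head tvar_def)
  moreover have "embed_xt D = xvar ^ m * (xvar - constK tvar) ^ n"
  proof -
    have "fract_poly [:0, 1::'a poly:] = [:0, 1:]" and "fract_poly [:-[:0, 1:], 1::'a poly:] = [:-tvar, 1:]"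
      by (simp_all add: tvar_def map_poly_pCons flip: to_fract_uminus)
    then show ?thesis
      by (simp only: embed_xt_def D_def fract_poly_mult fract_poly_power to_fract_mult to_fract_power
          xvar_def[symmetric] xvar_minus_constK[symmetric])
  qed
  moreover have "spec_t0 D = [:0, 1:] ^ (m + n)"
  proof -
    have "spec_t0 [:0, 1::'a poly:] = [:0, 1:]" and "spec_t0 [:-[:0, 1:], 1::'a poly:] = [:0, 1:]"
      by (simp_all add: spec_t0_def map_poly_pCons)
    then show ?thesis
      by (simp only: D_def spec_t0_mult spec_t0_power power_add)
  qed
  moreover from this have "D \<noteq> 0"
    by (auto simp: spec_t0_def)
  ultimately show ?thesis
    unfolding specializes_to_def
    by (intro exI[of _ N] exI[of _ D]) (simp add: N_def spec_t0_binomial_head)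
qed

lemma single_pole_at_0_monom_quotient:
  assumes "c \<noteq> 0" and "d < k"
  shows "single_pole_at_0 (Fract (monom c d) ([:0, 1:] ^ k)) (k - d)"
  unfolding single_pole_at_0_def
proof (intro conjI exI)
  have "monom c d * [:0, 1:] ^ (k - d) = [:c:] * [:0, 1:] ^ k"
    using assms(2) by (simp add: monom_altdef flip: power_add)
  then show "Fract (monom c d) ([:0, 1:] ^ k) = Fract [:c:] ([:0, 1:] ^ (k - d))"
    by (simp add: eq_fract)
qed (use assms in simp_all)

lemma exists_partial_fractions_specializing_to_single_pole:
  assumes choose_Suc: "of_nat (Suc n choose Suc d) \<noteq> (0::'a::field)"
    and choose: "of_nat (n choose d) \<noteq> (0::'a)" and choose_Suc_left: "of_nat (Suc n choose d) \<noteq> (0::'a)"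
  shows "\<exists>(G :: 'a poly fract poly fract) \<alpha> apw \<beta> R.
     G = (\<Sum>i = 1..Suc a. constK (\<alpha> i) / xvar ^ i) + constK apw / xvar ^ (Suc a + Suc d)
         + (\<Sum>j = 1..Suc n. constK (\<beta> j) / (xvar - constK tvar) ^ j)
     \<and> apw \<noteq> 0 \<and> \<alpha> (Suc a) \<noteq> 0 \<and> \<beta> (Suc n) \<noteq> 0
     \<and> specializes_to G R \<and> single_pole_at_0 R (Suc a + Suc n + 1)"
proof -
  define G :: "'a poly fract poly fract"
    where "G = to_fract (binomial_head tvar (Suc n) d) / (xvar ^ (Suc a + Suc d) * (xvar - constK tvar) ^ Suc n)"
  define R where "R = Fract (monom ((-1) ^ d * of_nat (Suc n choose d)) d) ([:0, 1::'a:] ^ (Suc a + Suc d + Suc n))"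
  have "tvar \<noteq> (0 :: 'a poly fract)"
    by (simp add: tvar_def)
  then obtain \<alpha> apw \<beta> where decomposition: "G = (\<Sum>i = 1..Suc a. constK (\<alpha> i) / xvar ^ i) + constK apw / xvar ^ (Suc a + Suc d)
         + (\<Sum>j = 1..Suc n. constK (\<beta> j) / (xvar - constK tvar) ^ j)"
      and nonzero: "apw \<noteq> 0" "\<alpha> (Suc a) \<noteq> 0" "\<beta> (Suc n) \<noteq> 0"
    using partial_fractions_binomial_head[of tvar n d a] choose_Suc choose
    unfolding G_def of_nat_fract_poly_eq_0_iff by blast
  have "specializes_to G R"
    unfolding G_def R_def by (rule specializes_to_binomial_head_quotient)
  moreover have "single_pole_at_0 R (Suc a + Suc n + 1)"
  proof -
    have "Suc a + Suc n + 1 = Suc a + Suc d + Suc n - d"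
      by simp
    then show ?thesis
      unfolding R_def using choose_Suc_left by (simp only:) (rule single_pole_at_0_monom_quotient; simp)
  qed
  ultimately show ?thesis
    using decomposition nonzero
    by (intro exI[of _ G] exI[of _ \<alpha>] exI[of _ apw] exI[of _ \<beta>] exI[of _ R] conjI)
qed

section \<open>Carries in base p\<close>

lemma prime_not_dvd_choose_le_mod:
  fixes p m :: nat
  assumes p: "prime p" and "j \<le> m mod p"
  shows "\<not> p dvd (m choose j)"
  using assms(2)
proof (induction j)
  case 0
  then show ?case
    using p by (metis One_nat_def binomial_n_0 dvd_1_iff_1 not_prime_1)
next
  case (Suc j)
  then have j: "j < m mod p"
    by simp
  have "m - j = m div p * p + (m mod p - j)"
    using j mod_less_eq_dividend[of m p] div_mult_mod_eq[of m p] by linarith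
  then have "(m - j) mod p = (m mod p - j) mod p"
    by simp
  also have "\<dots> = m mod p - j"
    using p by (simp add: prime_gt_0_nat less_imp_diff_less)
  finally have "(m - j) mod p = m mod p - j" .
  then have "\<not> p dvd (m - j)"
    using j by (simp add: dvd_eq_mod_eq_0)
  moreover have "\<not> p dvd (m choose j)"
    using Suc.IH j by simp
  ultimately have "\<not> p dvd ((m - j) * (m choose j))"
    using p by (simp add: prime_dvd_mult_iff)
  moreover have "(m - j) * (m choose j) = Suc j * (m choose Suc j)"
    using binomial_absorb_comp[of m j] times_binomial_minus1_eq[of "Suc j" m] by simp
  ultimately show ?case
    by auto
qed

lemma least_multiple_ge:
  fixes p e :: nat
  assumes "0 < p" and "0 < e"
  shows "(LEAST m. p dvd m \<and> e \<le> m) = e + (p - 1 - (e - 1) mod p)"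
proof -
  define q where "q = (e - 1) div p"
  have e: "e - 1 = q * p + (e - 1) mod p" and "(e - 1) mod p < p"
    using assms(1) by (simp_all add: q_def)
  then have eq: "e + (p - 1 - (e - 1) mod p) = Suc q * p"
    using assms(2) by (simp add: algebra_simps)
  have "(LEAST m. p dvd m \<and> e \<le> m) = Suc q * p"
  proof (rule Least_equality)
    show "p dvd Suc q * p \<and> e \<le> Suc q * p"
      using eq by (metis dvd_triv_right le_add1)
  next
    fix m assume m: "p dvd m \<and> e \<le> m"
    then obtain k where "m = k * p"
      by (metis dvd_def mult.commute)
    then have "q * p < k * p"
      using m e assms(2) by linarith
    then have "Suc q \<le> k"
      by simp
    then show "Suc q * p \<le> m"
      using \<open>m = k * p\<close> by (simp only: mult_le_mono1)
  qed
  then show ?thesis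
    using eq by simp
qed

lemma carry_from_floor_div:
  fixes A B p :: nat
  assumes "A div p + B div p < (A + B + 1) div p" and "\<not> p dvd (A + B + 1)"
  shows "p \<le> A mod p + B mod p"
proof -
  have "p \<noteq> 0"
    using assms(1) by (cases p) simp_all
  define r where "r = A mod p + B mod p + 1"
  have "A + B + 1 = r + (A div p + B div p) * p"
    by (simp add: r_def algebra_simps)
  then have "(A + B + 1) div p = r div p + (A div p + B div p)" and "(A + B + 1) mod p = r mod p"
    using \<open>p \<noteq> 0\<close> by simp_all
  then have "0 < r div p" and "r \<noteq> p"
    using assms by (auto simp: dvd_eq_mod_eq_0)
  then have "p \<le> r" and "r \<noteq> p"
    by (simp_all add: div_greater_zero_iff)
  then show ?thesis
    by (simp add: r_def)
qed

lemma carry_gives_binomials_prime_to_p: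
  fixes p e1 e2 :: nat
  assumes p: "prime p" and e_pos: "0 < e1" "0 < e2"
    and ndvd: "\<not> p dvd ((e1 + e2 - 1) * (e1 - 1) * (e2 - 1))"
    and floors: "(e1 - 1) div p + (e2 - 1) div p < (e1 + e2 - 1) div p"
  obtains a n d where "e1 - 1 = Suc a" and "e2 - 1 = Suc n" and "(LEAST m. p dvd m \<and> e1 \<le> m) = Suc a + Suc d"
    and "\<not> p dvd (Suc n choose Suc d)" and "\<not> p dvd (n choose d)" and "\<not> p dvd (Suc n choose d)"
proof -
  have ndvd_sum: "\<not> p dvd (e1 + e2 - 1)" and ndvd1: "\<not> p dvd (e1 - 1)" and ndvd2: "\<not> p dvd (e2 - 1)"
    using ndvd by (meson dvd_mult dvd_mult2)+
  define d where "d = p - 1 - (e1 - 1) mod p"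
  have "(e1 - 1) + (e2 - 1) + 1 = e1 + e2 - 1"
    using e_pos by simp
  then have "p \<le> (e1 - 1) mod p + (e2 - 1) mod p"
    using carry_from_floor_div[of "e1 - 1" p "e2 - 1"] floors ndvd_sum by metis
  moreover have "(e1 - 1) mod p < p"
    using p by (simp add: prime_gt_0_nat)
  ultimately have carry: "Suc d \<le> (e2 - 1) mod p"
    unfolding d_def by linarith
  obtain a where a: "e1 - 1 = Suc a"
    using ndvd1 by (cases "e1 - 1") auto
  obtain n where n: "e2 - 1 = Suc n"
    using carry by (cases "e2 - 1") auto
  have least: "(LEAST m. p dvd m \<and> e1 \<le> m) = Suc a + Suc d"
    unfolding d_def using p e_pos a by (simp add: least_multiple_ge prime_gt_0_nat)
  have "\<not> p dvd Suc n"
    using ndvd2 n by simp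
  then have "Suc n mod p = Suc (n mod p)"
    by (metis mod_Suc dvd_eq_mod_eq_0)
  then have "\<not> p dvd (Suc n choose Suc d)" "\<not> p dvd (n choose d)" "\<not> p dvd (Suc n choose d)"
    using carry n by (simp_all add: prime_not_dvd_choose_le_mod[OF p] del: binomial_Suc_Suc)
  with least show ?thesis
    by (rule that[OF a n])
qed

theorem proposition5p5:
  fixes e1 e2 :: nat
  assumes charp: "CHAR('a::alg_closed_field) > 0"
    and e_pos: "e1 > 0" "e2 > 0" and e_ord: "e1 \<ge> e2"
    and ndvd: "\<not> CHAR('a) dvd ((e1 + e2 - 1) * (e1 - 1) * (e2 - 1))"
    and floors: "(e1 + e2 - 1) div CHAR('a) > (e1 - 1) div CHAR('a) + (e2 - 1) div CHAR('a)"
  shows "\<exists>(G :: 'a poly fract poly fract) (a :: nat \<Rightarrow> 'a poly fract) (apw :: 'a poly fract)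
            (b :: nat \<Rightarrow> 'a poly fract) (R :: 'a poly fract).
     (let pw = (LEAST m. CHAR('a) dvd m \<and> e1 \<le> m) in
        G = (\<Sum>i = 1..e1 - 1. constK (a i) / xvar ^ i) + constK apw / xvar ^ pw
            + (\<Sum>j = 1..e2 - 1. constK (b j) / (xvar - constK tvar) ^ j))
     \<and> apw \<noteq> 0 \<and> a (e1 - 1) \<noteq> 0 \<and> b (e2 - 1) \<noteq> 0
     \<and> specializes_to G R \<and> single_pole_at_0 R (e1 + e2 - 1)"
proof -
  have p: "prime CHAR('a)"
    using charp prime_CHAR_semidom by blast
  obtain a n d where a: "e1 - 1 = Suc a" and n: "e2 - 1 = Suc n"
    and pw: "(LEAST m. CHAR('a) dvd m \<and> e1 \<le> m) = Suc a + Suc d"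
    and binomials: "\<not> CHAR('a) dvd (Suc n choose Suc d)" "\<not> CHAR('a) dvd (n choose d)"
      "\<not> CHAR('a) dvd (Suc n choose d)"
    by (rule carry_gives_binomials_prime_to_p[OF p e_pos ndvd floors])
  have "of_nat (Suc n choose Suc d) \<noteq> (0::'a)" "of_nat (n choose d) \<noteq> (0::'a)"
      "of_nat (Suc n choose d) \<noteq> (0::'a)"
    unfolding of_nat_eq_0_iff_char_dvd by (fact binomials)+
  then have "\<exists>(G :: 'a poly fract poly fract) \<alpha> apw \<beta> R.
     G = (\<Sum>i = 1..Suc a. constK (\<alpha> i) / xvar ^ i) + constK apw / xvar ^ (Suc a + Suc d)
         + (\<Sum>j = 1..Suc n. constK (\<beta> j) / (xvar - constK tvar) ^ j)
     \<and> apw \<noteq> 0 \<and> \<alpha> (Suc a) \<noteq> 0 \<and> \<beta> (Suc n) \<noteq> 0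
     \<and> specializes_to G R \<and> single_pole_at_0 R (Suc a + Suc n + 1)"
    by (rule exists_partial_fractions_specializing_to_single_pole)
  moreover have "e1 + e2 - 1 = Suc a + Suc n + 1"
    using a n by simp
  ultimately show ?thesis
    unfolding Let_def pw a n by simp
qed

end
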